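(* Let $\mathcal{C}$ be a d-category and $X$ a $\mathcal{C}$-automaton. A track object $\Gamma$ belongs to $\mathrm{Lang}(X)$ if and only if $\Gamma\cong\widehat{\pi_X\circ\alpha}$ (as $\mathcal{C}$-automata) for some accepting path $\alpha$ in $X$. That is, $\mathrm{Lang}(X)=\{\widehat{\pi_X\circ\alpha}\mid\alpha\text{ accepting path in }X\}$ up to isomorphism.
   Context: A d-category is a small category $\mathcal{C}$ with wide subcategories $\mathcal{C}^+$ (formorphisms) and $\mathcal{C}^-$ (backmorphisms) such that an invertible $\varphi$ is in $\mathcal{C}^+$ iff $\varphi^{-1}\in\mathcal{C}^-$; d-functors preserve both. A $\mathcal{C}$-presheaf is a functor $X:\mathcal{C}^{op}\to\mathbf{Set}$; $\mathsf{E}X$ is its category of elements (objects $(U,x)$, $x\in X[U]$; morphisms $(V,y)\to(U,x)$ the $\varphi:V\to U$ with $X[\varphi](x)=y$), with projection $\pi_X$ and d-structure: a morphism is a for-/backmorphism iff its image under $\pi_X$ is. A $\mathcal{C}$-automaton is a presheaf $X$ with sets $\bot_X,\top_X$ of elements (start, accept); morphisms of automata are presheaf maps preserving them. A linear category is a bipointed d-category isomorphic to a finite (possibly empty) concatenation (gluing $\top$ to $\bot$) of $\mathbf S$ (formorphism $\bot\to\top$), $\mathbf T$ (backmorphism $\top\to\bot$), $\mathbf I$ (inverse pair). A path in a d-category $\mathcal D$ is a d-functor $\omega:\mathcal I\to\mathcal D$ from a linear category; a path in $X$ is a path in $\mathsf{E}X$, accepting if $\alpha(\bot_{\mathcal I})\in\bot_X$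 and $\alpha(\top_{\mathcal I})\in\top_X$. The track object of a path $\omega$ in $\mathcal{C}$ is $\widehat\omega=\operatorname{colim}_{i}\mathcal{C}(-,\omega(i))$ with single start element the image of $\mathrm{id}_{\omega(\bot)}$ and single accept element the image of $\mathrm{id}_{\omega(\top)}$; a track object is an automaton isomorphic to some $\widehat\omega$. $\mathrm{Lang}(X)$ is the class of track objects $\Gamma$ admitting a morphism of $\mathcal{C}$-automata $\Gamma\to X$. *)

theory Defs
  imports Main
begin

record ('o, 'm) dcat =
  obj  :: "'o set"
  arr  :: "'m set"
  sdom :: "'m \<Rightarrow> 'o"
  scod :: "'m \<Rightarrow> 'o"
  idt  :: "'o \<Rightarrow> 'm"
  cmp  :: "'m \<Rightarrow> 'm \<Rightarrow> 'm"   (* cmp g f = g \<circ> f, defined when scod f = sdom g *)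
  fwd  :: "'m set"
  bwd  :: "'m set"

definition hom :: "('o, 'm, 'z) dcat_scheme \<Rightarrow> 'o \<Rightarrow> 'o \<Rightarrow> 'm set" where
  "hom C a b = {f \<in> arr C. sdom C f = a \<and> scod C f = b}"

definition category :: "('o, 'm, 'z) dcat_scheme \<Rightarrow> bool" where
  "category C \<longleftrightarrow>
     (\<forall>f\<in>arr C. sdom C f \<in> obj C \<and> scod C f \<in> obj C) \<and>
     (\<forall>a\<in>obj C. idt C a \<in> hom C a a) \<and>
     (\<forall>f\<in>arr C. \<forall>g\<in>arr C. scod C f = sdom C g \<longrightarrow>
         cmp C g f \<in> hom C (sdom C f) (scod C g)) \<and>
     (\<forall>f\<in>arr C. cmp C f (idt C (sdom C f)) = f \<and> cmp C (idt C (scod C f)) f = f) \<and>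
     (\<forall>f\<in>arr C. \<forall>g\<in>arr C. \<forall>h\<in>arr C. scod C f = sdom C g \<longrightarrow> scod C g = sdom C h \<longrightarrow>
         cmp C h (cmp C g f) = cmp C (cmp C h g) f)"

definition inverse_pair :: "('o, 'm, 'z) dcat_scheme \<Rightarrow> 'm \<Rightarrow> 'm \<Rightarrow> bool" where
  "inverse_pair C f g \<longleftrightarrow> f \<in> arr C \<and> g \<in> arr C \<and>
     scod C f = sdom C g \<and> scod C g = sdom C f \<and>
     cmp C g f = idt C (sdom C f) \<and> cmp C f g = idt C (sdom C g)"

definition wide_subcat :: "('o, 'm, 'z) dcat_scheme \<Rightarrow> 'm set \<Rightarrow> bool" where
  "wide_subcat C S \<longleftrightarrow> S \<subseteq> arr C \<and> (\<forall>a\<in>obj C. idt C a \<in> S) \<and>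
     (\<forall>f\<in>S. \<forall>g\<in>S. scod C f = sdom C g \<longrightarrow> cmp C g f \<in> S)"

definition dcategory :: "('o, 'm, 'z) dcat_scheme \<Rightarrow> bool" where
  "dcategory C \<longleftrightarrow> category C \<and> wide_subcat C (fwd C) \<and> wide_subcat C (bwd C) \<and>
     (\<forall>f g. inverse_pair C f g \<longrightarrow> (f \<in> fwd C \<longleftrightarrow> g \<in> bwd C))"

definition dfunctor ::
  "('o, 'm, 'z) dcat_scheme \<Rightarrow> ('p, 'n, 'w) dcat_scheme \<Rightarrow> ('o \<Rightarrow> 'p) \<Rightarrow> ('m \<Rightarrow> 'n) \<Rightarrow> bool" where
  "dfunctor C D Fo Fa \<longleftrightarrow>
     (\<forall>a\<in>obj C. Fo a \<in> obj D) \<and>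
     (\<forall>f\<in>arr C. Fa f \<in> hom D (Fo (sdom C f)) (Fo (scod C f))) \<and>
     (\<forall>a\<in>obj C. Fa (idt C a) = idt D (Fo a)) \<and>
     (\<forall>f\<in>arr C. \<forall>g\<in>arr C. scod C f = sdom C g \<longrightarrow> Fa (cmp C g f) = cmp D (Fa g) (Fa f)) \<and>
     (\<forall>f\<in>fwd C. Fa f \<in> fwd D) \<and> (\<forall>f\<in>bwd C. Fa f \<in> bwd D)"

datatype letter = S | T | I

text \<open>The concatenation of the word w of copies of S, T, I: objects 0..length w
  (bottom = 0, top = length w); it is thin, the unique morphism i -> j being the pair (i,j).
  In S the morphism bot->top is a formorphism, in T the morphism top->bot is a backmorphism,
  in I the morphism bot->top is a formorphism and its inverse top->bot a backmorphism.\<close>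
definition lin :: "letter list \<Rightarrow> (nat, nat \<times> nat) dcat" where
  "lin w = (let n = length w;
               A = {(i, j). i \<le> n \<and> j \<le> n \<and>
                    ((i \<le> j \<and> (\<forall>k. i \<le> k \<and> k < j \<longrightarrow> w ! k \<in> {S, I})) \<or>
                     (j \<le> i \<and> (\<forall>k. j \<le> k \<and> k < i \<longrightarrow> w ! k \<in> {T, I})))}
           in \<lparr> obj = {0..n}, arr = A, sdom = fst, scod = snd, idt = (\<lambda>i. (i, i)),
                cmp = (\<lambda>g f. (fst f, snd g)),
                fwd = {(i, j) \<in> A. i \<le> j}, bwd = {(i, j) \<in> A. j \<le> i} \<rparr>)"

definition is_path :: "('o, 'm, 'z) dcat_scheme \<Rightarrow> letter list \<Rightarrow> (nat \<Rightarrow> 'o) \<Rightarrow> (nat \<times> nat \<Rightarrow> 'm) \<Rightarrow> bool" where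
  "is_path D w Fo Fa \<longleftrightarrow> dfunctor (lin w) D Fo Fa"

record ('o, 'm, 'x) automaton =
  elts  :: "'o \<Rightarrow> 'x set"
  act   :: "'m \<Rightarrow> 'x \<Rightarrow> 'x"         (* X[phi] : X[cod phi] -> X[dom phi] *)
  start :: "('o \<times> 'x) set"
  accept :: "('o \<times> 'x) set"

definition presheaf :: "('o, 'm, 'z) dcat_scheme \<Rightarrow> ('o, 'm, 'x) automaton \<Rightarrow> bool" where
  "presheaf C X \<longleftrightarrow>
     (\<forall>f\<in>arr C. \<forall>x\<in>elts X (scod C f). act X f x \<in> elts X (sdom C f)) \<and>
     (\<forall>a\<in>obj C. \<forall>x\<in>elts X a. act X (idt C a) x = x) \<and>
     (\<forall>f\<in>arr C. \<forall>g\<in>arr C. scod C f = sdom C g \<longrightarrow>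
        (\<forall>x\<in>elts X (scod C g). act X (cmp C g f) x = act X f (act X g x)))"

definition elements :: "('o, 'm, 'z) dcat_scheme \<Rightarrow> ('o, 'm, 'x) automaton \<Rightarrow> ('o \<times> 'x) set" where
  "elements C X = {(U, x). U \<in> obj C \<and> x \<in> elts X U}"

definition is_automaton :: "('o, 'm, 'z) dcat_scheme \<Rightarrow> ('o, 'm, 'x) automaton \<Rightarrow> bool" where
  "is_automaton C X \<longleftrightarrow> presheaf C X \<and> start X \<subseteq> elements C X \<and> accept X \<subseteq> elements C X"

definition aut_hom ::
  "('o, 'm, 'z) dcat_scheme \<Rightarrow> ('o, 'm, 'x) automaton \<Rightarrow> ('o, 'm, 'y) automaton \<Rightarrow> ('o \<Rightarrow> 'x \<Rightarrow> 'y) \<Rightarrow> bool" where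
  "aut_hom C X Y \<eta> \<longleftrightarrow> is_automaton C X \<and> is_automaton C Y \<and>
     (\<forall>U\<in>obj C. \<forall>x\<in>elts X U. \<eta> U x \<in> elts Y U) \<and>
     (\<forall>f\<in>arr C. \<forall>x\<in>elts X (scod C f). \<eta> (sdom C f) (act X f x) = act Y f (\<eta> (scod C f) x)) \<and>
     (\<forall>(U, x)\<in>start X. (U, \<eta> U x) \<in> start Y) \<and>
     (\<forall>(U, x)\<in>accept X. (U, \<eta> U x) \<in> accept Y)"

definition aut_iso :: "('o, 'm, 'z) dcat_scheme \<Rightarrow> ('o, 'm, 'x) automaton \<Rightarrow> ('o, 'm, 'y) automaton \<Rightarrow> bool" where
  "aut_iso C X Y \<longleftrightarrow> (\<exists>\<eta> \<theta>. aut_hom C X Y \<eta> \<and> aut_hom C Y X \<theta> \<and>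
     (\<forall>U\<in>obj C. (\<forall>x\<in>elts X U. \<theta> U (\<eta> U x) = x) \<and> (\<forall>y\<in>elts Y U. \<eta> U (\<theta> U y) = y)))"

definition elcat :: "('o, 'm, 'z) dcat_scheme \<Rightarrow> ('o, 'm, 'x) automaton \<Rightarrow> ('o \<times> 'x, 'm \<times> 'x) dcat" where
  "elcat C X = (let A = {(f, x). f \<in> arr C \<and> x \<in> elts X (scod C f)} in
     \<lparr> obj = elements C X, arr = A,
       sdom = (\<lambda>(f, x). (sdom C f, act X f x)), scod = (\<lambda>(f, x). (scod C f, x)),
       idt = (\<lambda>(U, x). (idt C U, x)),
       cmp = (\<lambda>(g, x) (f, y). (cmp C g f, x)),
       fwd = {(f, x) \<in> A. f \<in> fwd C}, bwd = {(f, x) \<in> A. f \<in> bwd C} \<rparr>)"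

definition accepting_path ::
  "('o, 'm, 'z) dcat_scheme \<Rightarrow> ('o, 'm, 'x) automaton \<Rightarrow> letter list \<Rightarrow> (nat \<Rightarrow> 'o \<times> 'x) \<Rightarrow> (nat \<times> nat \<Rightarrow> 'm \<times> 'x) \<Rightarrow> bool" where
  "accepting_path C X w Ao Aa \<longleftrightarrow> is_path (elcat C X) w Ao Aa \<and>
     Ao 0 \<in> start X \<and> Ao (length w) \<in> accept X"

text \<open>The colimit of the representables C(-, omega(i)), computed pointwise:
  at U, the quotient of the disjoint union of the C(U, omega i) by the equivalence
  relation generated by (i, f) ~ (j, omega(g) o f) for g : i -> j in the linear category.\<close>
definition tr_gen :: "('o, 'm, 'z) dcat_scheme \<Rightarrow> letter list \<Rightarrow> (nat \<Rightarrow> 'o) \<Rightarrow> 'o \<Rightarrow> (nat \<times> 'm) set" where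
  "tr_gen C w Fo U = {(i, f). i \<le> length w \<and> f \<in> hom C U (Fo i)}"

definition tr_step :: "('o, 'm, 'z) dcat_scheme \<Rightarrow> letter list \<Rightarrow> (nat \<Rightarrow> 'o) \<Rightarrow> (nat \<times> nat \<Rightarrow> 'm) \<Rightarrow> 'o \<Rightarrow> ((nat \<times> 'm) \<times> (nat \<times> 'm)) set" where
  "tr_step C w Fo Fa U = {((i, f), (j, h)). (i, f) \<in> tr_gen C w Fo U \<and>
      (i, j) \<in> arr (lin w) \<and> h = cmp C (Fa (i, j)) f}"

definition tr_rel :: "('o, 'm, 'z) dcat_scheme \<Rightarrow> letter list \<Rightarrow> (nat \<Rightarrow> 'o) \<Rightarrow> (nat \<times> nat \<Rightarrow> 'm) \<Rightarrow> 'o \<Rightarrow> ((nat \<times> 'm) \<times> (nat \<times> 'm)) set" where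
  "tr_rel C w Fo Fa U = (tr_step C w Fo Fa U \<union> (tr_step C w Fo Fa U)\<inverse>)\<^sup>*"

definition track :: "('o, 'm, 'z) dcat_scheme \<Rightarrow> letter list \<Rightarrow> (nat \<Rightarrow> 'o) \<Rightarrow> (nat \<times> nat \<Rightarrow> 'm) \<Rightarrow> ('o, 'm, (nat \<times> 'm) set) automaton" where
  "track C w Fo Fa =
     \<lparr> elts = (\<lambda>U. tr_gen C w Fo U // tr_rel C w Fo Fa U),
       act = (\<lambda>\<phi> c. (\<Union>(i, f)\<in>c. tr_rel C w Fo Fa (sdom C \<phi>) `` {(i, cmp C f \<phi>)})),
       start = {(Fo 0, tr_rel C w Fo Fa (Fo 0) `` {(0, idt C (Fo 0))})},
       accept = {(Fo (length w), tr_rel C w Fo Fa (Fo (length w)) `` {(length w, idt C (Fo (length w)))})} \<rparr>"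

definition is_track_object :: "('o, 'm, 'z) dcat_scheme \<Rightarrow> ('o, 'm, 'y) automaton \<Rightarrow> bool" where
  "is_track_object C G \<longleftrightarrow> (\<exists>w Fo Fa. is_path C w Fo Fa \<and> aut_iso C G (track C w Fo Fa))"

definition in_Lang :: "('o, 'm, 'z) dcat_scheme \<Rightarrow> ('o, 'm, 'x) automaton \<Rightarrow> ('o, 'm, 'y) automaton \<Rightarrow> bool" where
  "in_Lang C X G \<longleftrightarrow> is_track_object C G \<and> (\<exists>\<eta>. aut_hom C G X \<eta>)"

end

theory Submission
  imports Defs
begin

text \<open>A morphism of automata from the track object \<open>\<omega>\<close> to \<open>X\<close> is, by the Yoneda lemma and the
  universal property of the colimit, the same as a family of elements \<open>x\<^sub>i \<in> X[\<omega> i]\<close> with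
  \<open>X[\<omega>(i \<rightarrow> j)] x\<^sub>j = x\<^sub>i\<close>, i.e. a lift of \<open>\<omega>\<close> to a path \<open>\<alpha>\<close> in the category of elements
  with \<open>\<pi>\<^sub>X \<circ> \<alpha> = \<omega>\<close>; preservation of the start and accept elements says exactly that \<open>\<alpha>\<close> is
  accepting. Composing with an isomorphism \<open>\<Gamma> \<cong> \<omega>\<close> gives both directions.\<close>

lemma lin_simps:
  "obj (lin w) = {0..length w}"
  "sdom (lin w) = fst" "scod (lin w) = snd" "idt (lin w) = (\<lambda>i. (i, i))"
  "cmp (lin w) = (\<lambda>g f. (fst f, snd g))"
  by (simp_all add: lin_def Let_def)

lemma lin_arr_bounded: "(i, j) \<in> arr (lin w) \<Longrightarrow> i \<le> length w \<and> j \<le> length w"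
  by (simp add: lin_def Let_def)

lemma lin_fwd_bwd_subset: "fwd (lin w) \<subseteq> arr (lin w)" "bwd (lin w) \<subseteq> arr (lin w)"
  by (auto simp: lin_def Let_def)

lemma elcat_simps:
  "obj (elcat C X) = elements C X"
  "arr (elcat C X) = {(f, x). f \<in> arr C \<and> x \<in> elts X (scod C f)}"
  "sdom (elcat C X) = (\<lambda>(f, x). (sdom C f, act X f x))"
  "scod (elcat C X) = (\<lambda>(f, x). (scod C f, x))"
  "idt (elcat C X) = (\<lambda>(U, x). (idt C U, x))"
  "cmp (elcat C X) = (\<lambda>(g, x) (f, y). (cmp C g f, x))"
  "fwd (elcat C X) = {(f, x). f \<in> arr C \<and> x \<in> elts X (scod C f) \<and> f \<in> fwd C}"
  "bwd (elcat C X) = {(f, x). f \<in> arr C \<and> x \<in> elts X (scod C f) \<and> f \<in> bwd C}"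
  by (auto simp: elcat_def Let_def)

lemma category_dom_cod_obj:
  "category C \<Longrightarrow> f \<in> arr C \<Longrightarrow> sdom C f \<in> obj C \<and> scod C f \<in> obj C"
  unfolding category_def by blast

lemma category_idt:
  "category C \<Longrightarrow> a \<in> obj C \<Longrightarrow> idt C a \<in> hom C a a"
  unfolding category_def by blast

lemma category_cmp:
  "category C \<Longrightarrow> f \<in> arr C \<Longrightarrow> g \<in> arr C \<Longrightarrow> scod C f = sdom C g \<Longrightarrow>
    cmp C g f \<in> hom C (sdom C f) (scod C g)"
  unfolding category_def by blast

lemma category_cmp_idt:
  "category C \<Longrightarrow> f \<in> arr C \<Longrightarrow> cmp C f (idt C (sdom C f)) = f"
  "category C \<Longrightarrow> f \<in> arr C \<Longrightarrow> cmp C (idt C (scod C f)) f = f"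
  unfolding category_def by blast+

lemma presheaf_act_closed:
  "presheaf C X \<Longrightarrow> f \<in> arr C \<Longrightarrow> x \<in> elts X (scod C f) \<Longrightarrow> act X f x \<in> elts X (sdom C f)"
  unfolding presheaf_def by blast

lemma presheaf_act_idt:
  "presheaf C X \<Longrightarrow> a \<in> obj C \<Longrightarrow> x \<in> elts X a \<Longrightarrow> act X (idt C a) x = x"
  unfolding presheaf_def by blast

lemma presheaf_act_cmp:
  "presheaf C X \<Longrightarrow> f \<in> arr C \<Longrightarrow> g \<in> arr C \<Longrightarrow> scod C f = sdom C g \<Longrightarrow>
    x \<in> elts X (scod C g) \<Longrightarrow> act X (cmp C g f) x = act X f (act X g x)"
  unfolding presheaf_def by blast

lemma dfunctor_comp:
  assumes "dfunctor C D Fo Fa" and "dfunctor D E Go Ga"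
  shows "dfunctor C E (Go \<circ> Fo) (Ga \<circ> Fa)"
proof -
  have hom: "\<And>f. f \<in> arr C \<Longrightarrow> Fa f \<in> hom D (Fo (sdom C f)) (Fo (scod C f))"
    using assms(1) unfolding dfunctor_def by blast
  show ?thesis
    using assms unfolding dfunctor_def
    by (auto simp: hom_def dest!: hom)
qed

lemma dfunctor_elcat_projection: "dfunctor (elcat C X) C fst fst"
  unfolding dfunctor_def by (auto simp: elcat_simps elements_def hom_def)

lemma aut_hom_comp:
  assumes "category C" "aut_hom C X Y \<eta>" "aut_hom C Y Z \<zeta>"
  shows "aut_hom C X Z (\<lambda>U x. \<zeta> U (\<eta> U x))"
proof -
  have "scod C f \<in> obj C" if "f \<in> arr C" for f
    using category_dom_cod_obj[OF assms(1) that] ..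
  then show ?thesis
    using assms(2,3) unfolding aut_hom_def by fastforce
qed

lemma path_obj: "is_path C w Fo Fa \<Longrightarrow> i \<le> length w \<Longrightarrow> Fo i \<in> obj C"
  unfolding is_path_def dfunctor_def by (simp add: lin_simps)

lemma path_arr: "is_path C w Fo Fa \<Longrightarrow> (i, j) \<in> arr (lin w) \<Longrightarrow> Fa (i, j) \<in> hom C (Fo i) (Fo j)"
  unfolding is_path_def dfunctor_def by (force simp: lin_simps)

lemma tr_rel_refl: "(p, p) \<in> tr_rel C w Fo Fa U"
  by (simp add: tr_rel_def)

lemma tr_step_in_tr_rel: "(p, q) \<in> tr_step C w Fo Fa U \<Longrightarrow> (p, q) \<in> tr_rel C w Fo Fa U"
  by (auto simp: tr_rel_def)

lemma equiv_tr_rel: "equiv UNIV (tr_rel C w Fo Fa U)"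
  unfolding tr_rel_def
  by (intro equivI sym_rtrancl sym_Un_converse trans_rtrancl) (auto simp: refl_on_def)

definition path_lift ::
  "('o, 'm, 'x) automaton \<Rightarrow> letter list \<Rightarrow> (nat \<Rightarrow> 'o) \<Rightarrow> (nat \<times> nat \<Rightarrow> 'm) \<Rightarrow> (nat \<Rightarrow> 'x) \<Rightarrow> bool" where
  "path_lift X w Fo Fa xs \<longleftrightarrow>
     (\<forall>i\<le>length w. xs i \<in> elts X (Fo i)) \<and>
     (\<forall>(i, j)\<in>arr (lin w). act X (Fa (i, j)) (xs j) = xs i)"

definition accepting_lift ::
  "('o, 'm, 'x) automaton \<Rightarrow> letter list \<Rightarrow> (nat \<Rightarrow> 'o) \<Rightarrow> (nat \<times> nat \<Rightarrow> 'm) \<Rightarrow> (nat \<Rightarrow> 'x) \<Rightarrow> bool" where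
  "accepting_lift X w Fo Fa xs \<longleftrightarrow> path_lift X w Fo Fa xs \<and>
     (Fo 0, xs 0) \<in> start X \<and> (Fo (length w), xs (length w)) \<in> accept X"

lemma accepting_path_projects:
  assumes "accepting_path C X w Ao Aa"
  shows "is_path C w (fst \<circ> Ao) (fst \<circ> Aa)" and "accepting_lift X w (fst \<circ> Ao) (fst \<circ> Aa) (snd \<circ> Ao)"
proof -
  have P: "dfunctor (lin w) (elcat C X) Ao Aa"
    using assms by (simp add: accepting_path_def is_path_def)
  show "is_path C w (fst \<circ> Ao) (fst \<circ> Aa)"
    unfolding is_path_def using dfunctor_comp[OF P dfunctor_elcat_projection] .
  have "snd (Ao i) \<in> elts X (fst (Ao i))" if "i \<le> length w" for i
    using P that unfolding dfunctor_def by (auto simp: lin_simps elcat_simps elements_def case_prod_beta)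
  moreover have "act X (fst (Aa (i, j))) (snd (Ao j)) = snd (Ao i)" if "(i, j) \<in> arr (lin w)" for i j
  proof -
    have "Aa (i, j) \<in> hom (elcat C X) (Ao i) (Ao j)"
      using P that unfolding dfunctor_def by (auto simp: lin_simps)
    then show ?thesis
      by (cases "Aa (i, j)", cases "Ao i", cases "Ao j") (auto simp: hom_def elcat_simps)
  qed
  ultimately show "accepting_lift X w (fst \<circ> Ao) (fst \<circ> Aa) (snd \<circ> Ao)"
    using assms by (auto simp: accepting_lift_def path_lift_def accepting_path_def)
qed

lemma accepting_lift_is_accepting_path:
  assumes "is_path C w Fo Fa" and "accepting_lift X w Fo Fa xs"
  shows "accepting_path C X w (\<lambda>i. (Fo i, xs i)) (\<lambda>e. (Fa e, xs (snd e)))"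
proof -
  have lift: "path_lift X w Fo Fa xs"
    using assms(2) by (simp add: accepting_lift_def)
  have arr: "(Fa e, xs (snd e)) \<in> arr (elcat C X)" if "e \<in> arr (lin w)" for e
    using that path_arr[OF assms(1)] lin_arr_bounded lift
    by (cases e) (auto simp: elcat_simps path_lift_def hom_def)
  have "dfunctor (lin w) (elcat C X) (\<lambda>i. (Fo i, xs i)) (\<lambda>e. (Fa e, xs (snd e)))"
    unfolding dfunctor_def
  proof (intro conjI ballI impI)
    fix e assume e: "e \<in> fwd (lin w)"
    then have "e \<in> arr (lin w)" using lin_fwd_bwd_subset by blast
    then show "(Fa e, xs (snd e)) \<in> fwd (elcat C X)"
      using assms(1) arr e unfolding is_path_def dfunctor_def by (auto simp: elcat_simps)
  next
    fix e assume e: "e \<in> bwd (lin w)"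
    then have "e \<in> arr (lin w)" using lin_fwd_bwd_subset by blast
    then show "(Fa e, xs (snd e)) \<in> bwd (elcat C X)"
      using assms(1) arr e unfolding is_path_def dfunctor_def by (auto simp: elcat_simps)
  qed (use assms(1) lift arr path_obj[OF assms(1)] path_arr[OF assms(1)] in
       \<open>auto simp: is_path_def dfunctor_def lin_simps elcat_simps elements_def path_lift_def hom_def\<close>)
  then show ?thesis
    using assms(2) by (simp add: accepting_path_def is_path_def accepting_lift_def)
qed

definition tr_unit ::
  "('o, 'm, 'z) dcat_scheme \<Rightarrow> letter list \<Rightarrow> (nat \<Rightarrow> 'o) \<Rightarrow> (nat \<times> nat \<Rightarrow> 'm) \<Rightarrow> nat \<Rightarrow> (nat \<times> 'm) set"
where
  "tr_unit C w Fo Fa i = tr_rel C w Fo Fa (Fo i) `` {(i, idt C (Fo i))}"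

lemma track_start_accept:
  "start (track C w Fo Fa) = {(Fo 0, tr_unit C w Fo Fa 0)}"
  "accept (track C w Fo Fa) = {(Fo (length w), tr_unit C w Fo Fa (length w))}"
  by (simp_all add: track_def tr_unit_def)

lemma tr_gen_unit:
  assumes "category C" "is_path C w Fo Fa" "i \<le> length w"
  shows "(i, idt C (Fo i)) \<in> tr_gen C w Fo (Fo i)"
  using category_idt[OF assms(1) path_obj[OF assms(2,3)]] assms(3) by (simp add: tr_gen_def)

text \<open>The presheaf hypothesis makes the action on classes well defined without further work:
  the image of a class is again a class, and it contains \<open>(i, f \<circ> \<phi>)\<close>.\<close>

lemma track_act_class:
  assumes "presheaf C (track C w Fo Fa)" "\<phi> \<in> arr C" "(i, f) \<in> tr_gen C w Fo (scod C \<phi>)"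
  shows "act (track C w Fo Fa) \<phi> (tr_rel C w Fo Fa (scod C \<phi>) `` {(i, f)}) =
    tr_rel C w Fo Fa (sdom C \<phi>) `` {(i, cmp C f \<phi>)}"
proof -
  let ?R = "tr_rel C w Fo Fa"
  let ?a = "act (track C w Fo Fa) \<phi> (?R (scod C \<phi>) `` {(i, f)})"
  have "?R (scod C \<phi>) `` {(i, f)} \<in> elts (track C w Fo Fa) (scod C \<phi>)"
    using assms(3) by (simp add: track_def quotientI)
  then have "?a \<in> elts (track C w Fo Fa) (sdom C \<phi>)"
    using presheaf_act_closed[OF assms(1,2)] by blast
  then obtain q where q: "?a = ?R (sdom C \<phi>) `` {q}"
    by (auto simp: track_def elim!: quotientE)
  have "(i, cmp C f \<phi>) \<in> ?a"
    by (auto simp: track_def tr_rel_refl intro!: bexI[of _ "(i, f)"])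
  then have "(q, (i, cmp C f \<phi>)) \<in> ?R (sdom C \<phi>)"
    using q by simp
  then show ?thesis
    using q equiv_class_eq[OF equiv_tr_rel] by simp
qed

lemma track_act_unit:
  assumes "category C" "is_path C w Fo Fa" "presheaf C (track C w Fo Fa)" "(i, j) \<in> arr (lin w)"
  shows "act (track C w Fo Fa) (Fa (i, j)) (tr_unit C w Fo Fa j) = tr_unit C w Fo Fa i"
proof -
  let ?R = "tr_rel C w Fo Fa (Fo i)" and ?\<phi> = "Fa (i, j)"
  have \<phi>: "?\<phi> \<in> hom C (Fo i) (Fo j)"
    using path_arr[OF assms(2,4)] .
  have ij: "i \<le> length w" "j \<le> length w"
    using lin_arr_bounded[OF assms(4)] by auto
  have idt_left: "cmp C (idt C (Fo j)) ?\<phi> = ?\<phi>"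
    using category_cmp_idt(2)[OF assms(1), of ?\<phi>] \<phi> by (simp add: hom_def)
  have idt_right: "cmp C ?\<phi> (idt C (Fo i)) = ?\<phi>"
    using category_cmp_idt(1)[OF assms(1), of ?\<phi>] \<phi> by (simp add: hom_def)
  have act: "act (track C w Fo Fa) ?\<phi> (tr_unit C w Fo Fa j) = ?R `` {(j, ?\<phi>)}"
    using track_act_class[OF assms(3), of ?\<phi> j "idt C (Fo j)"] tr_gen_unit[OF assms(1,2) ij(2)] \<phi> idt_left
    by (simp add: tr_unit_def hom_def)
  have "((i, idt C (Fo i)), (j, ?\<phi>)) \<in> tr_step C w Fo Fa (Fo i)"
    using tr_gen_unit[OF assms(1,2) ij(1)] assms(4) idt_right by (simp add: tr_step_def)
  then have "?R `` {(i, idt C (Fo i))} = ?R `` {(j, ?\<phi>)}"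
    by (intro equiv_class_eq[OF equiv_tr_rel] tr_step_in_tr_rel)
  then show ?thesis
    using act by (simp add: tr_unit_def)
qed

definition lift_eval :: "('o, 'm, 'x) automaton \<Rightarrow> (nat \<Rightarrow> 'x) \<Rightarrow> nat \<times> 'm \<Rightarrow> 'x" where
  "lift_eval X xs = (\<lambda>(i, f). act X f (xs i))"

lemma tr_step_preserves_lift_eval:
  assumes "category C" "is_path C w Fo Fa" "path_lift X w Fo Fa xs" "presheaf C X"
    and "(p, q) \<in> tr_step C w Fo Fa U"
  shows "q \<in> tr_gen C w Fo U \<and> lift_eval X xs q = lift_eval X xs p"
proof -
  obtain i f j where pq: "p = (i, f)" "q = (j, cmp C (Fa (i, j)) f)"
    and f: "f \<in> hom C U (Fo i)" and ij: "(i, j) \<in> arr (lin w)"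
    using assms(5) by (auto simp: tr_step_def tr_gen_def)
  have \<phi>: "Fa (i, j) \<in> hom C (Fo i) (Fo j)"
    using path_arr[OF assms(2) ij] .
  have "cmp C (Fa (i, j)) f \<in> hom C U (Fo j)"
    using category_cmp[OF assms(1)] f \<phi> by (auto simp: hom_def)
  moreover have "act X (cmp C (Fa (i, j)) f) (xs j) = act X f (xs i)"
    using presheaf_act_cmp[OF assms(4)] f \<phi> assms(3) ij lin_arr_bounded[OF ij]
    by (auto simp: hom_def path_lift_def)
  ultimately show ?thesis
    using pq lin_arr_bounded[OF ij] by (simp add: tr_gen_def lift_eval_def)
qed

lemma tr_rel_preserves_lift_eval:
  assumes "category C" "is_path C w Fo Fa" "path_lift X w Fo Fa xs" "presheaf C X"
    and "(p, q) \<in> tr_rel C w Fo Fa U" "p \<in> tr_gen C w Fo U"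
  shows "q \<in> tr_gen C w Fo U \<and> lift_eval X xs q = lift_eval X xs p"
  using assms(5) unfolding tr_rel_def
proof (induction rule: rtrancl_induct)
  case base
  then show ?case using assms(6) by simp
next
  case (step q r)
  note preserves = tr_step_preserves_lift_eval[OF assms(1-4)]
  from step.hyps(2) show ?case
  proof
    assume "(q, r) \<in> tr_step C w Fo Fa U"
    then show ?thesis using preserves step.IH by metis
  next
    assume "(q, r) \<in> (tr_step C w Fo Fa U)\<inverse>"
    then have "(r, q) \<in> tr_step C w Fo Fa U" by simp
    moreover from this have "r \<in> tr_gen C w Fo U" by (auto simp: tr_step_def)
    ultimately show ?thesis using preserves step.IH by metis
  qed
qed

text \<open>The morphism picks an arbitrary representative \<open>(i, f)\<close> of a class and returns \<open>X[f] x\<^sub>i\<close>;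
  by \<open>tr_rel_preserves_lift_eval\<close> the choice does not matter.\<close>

lemma aut_hom_from_accepting_lift:
  assumes C: "category C" and P: "is_path C w Fo Fa" and L: "accepting_lift X w Fo Fa xs"
    and X: "is_automaton C X" and T: "is_automaton C (track C w Fo Fa)"
  shows "aut_hom C (track C w Fo Fa) X (\<lambda>U c. lift_eval X xs (SOME p. p \<in> c))"
    (is "aut_hom _ _ _ ?\<eta>")
proof -
  let ?R = "tr_rel C w Fo Fa"
  have PX: "presheaf C X" and PT: "presheaf C (track C w Fo Fa)"
    using X T by (simp_all add: is_automaton_def)
  have lift: "path_lift X w Fo Fa xs"
    using L by (simp add: accepting_lift_def)
  have eval_class: "?\<eta> U (?R U `` {p}) = lift_eval X xs p" if "p \<in> tr_gen C w Fo U" for U p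
  proof -
    have "(SOME q. q \<in> ?R U `` {p}) \<in> ?R U `` {p}"
      by (rule someI[of _ p]) (simp add: tr_rel_refl)
    then show ?thesis
      using tr_rel_preserves_lift_eval[OF C P lift PX _ that] by simp
  qed
  have eval_elts: "lift_eval X xs (i, f) \<in> elts X U" if "(i, f) \<in> tr_gen C w Fo U" for U i f
    using that presheaf_act_closed[OF PX, of f "xs i"] lift
    by (auto simp: tr_gen_def hom_def path_lift_def lift_eval_def)
  have eval_unit: "?\<eta> (Fo i) (tr_unit C w Fo Fa i) = xs i" if "i \<le> length w" for i
    using eval_class[OF tr_gen_unit[OF C P that]] presheaf_act_idt[OF PX path_obj[OF P that]] lift that
    by (simp add: tr_unit_def lift_eval_def path_lift_def)
  have "?\<eta> (sdom C \<phi>) (act (track C w Fo Fa) \<phi> c) = act X \<phi> (?\<eta> (scod C \<phi>) c)"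
    if \<phi>: "\<phi> \<in> arr C" and c: "c \<in> elts (track C w Fo Fa) (scod C \<phi>)" for \<phi> c
  proof -
    obtain i f where gen: "(i, f) \<in> tr_gen C w Fo (scod C \<phi>)" and c_eq: "c = ?R (scod C \<phi>) `` {(i, f)}"
      using c by (auto simp: track_def elim!: quotientE)
    then have f: "f \<in> hom C (scod C \<phi>) (Fo i)" "i \<le> length w"
      by (auto simp: tr_gen_def)
    have "(i, cmp C f \<phi>) \<in> tr_gen C w Fo (sdom C \<phi>)"
      using category_cmp[OF C \<phi>] f by (auto simp: tr_gen_def hom_def)
    then have "?\<eta> (sdom C \<phi>) (act (track C w Fo Fa) \<phi> c) = act X (cmp C f \<phi>) (xs i)"
      using eval_class track_act_class[OF PT \<phi> gen] c_eq by (simp add: lift_eval_def)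
    also have "\<dots> = act X \<phi> (act X f (xs i))"
      using presheaf_act_cmp[OF PX \<phi>] f lift by (auto simp: hom_def path_lift_def)
    also have "\<dots> = act X \<phi> (?\<eta> (scod C \<phi>) c)"
      using eval_class[OF gen] c_eq by (simp add: lift_eval_def)
    finally show ?thesis .
  qed
  moreover have "\<forall>U\<in>obj C. \<forall>c\<in>elts (track C w Fo Fa) U. ?\<eta> U c \<in> elts X U"
    using eval_class eval_elts by (auto simp: track_def elim!: quotientE)
  ultimately show ?thesis
    using X T L eval_unit
    by (auto simp: aut_hom_def track_start_accept accepting_lift_def)
qed

lemma accepting_lift_from_aut_hom:
  assumes C: "category C" and P: "is_path C w Fo Fa" and H: "aut_hom C (track C w Fo Fa) X \<eta>"
  shows "accepting_lift X w Fo Fa (\<lambda>i. \<eta> (Fo i) (tr_unit C w Fo Fa i))"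
proof -
  have PT: "presheaf C (track C w Fo Fa)"
    using H by (simp add: aut_hom_def is_automaton_def)
  have unit_elts: "tr_unit C w Fo Fa i \<in> elts (track C w Fo Fa) (Fo i)" if "i \<le> length w" for i
    using tr_gen_unit[OF C P that] by (simp add: track_def tr_unit_def quotientI)
  have "\<eta> (Fo i) (tr_unit C w Fo Fa i) \<in> elts X (Fo i)" if "i \<le> length w" for i
    using H unit_elts[OF that] path_obj[OF P that] by (simp add: aut_hom_def)
  moreover have "act X (Fa (i, j)) (\<eta> (Fo j) (tr_unit C w Fo Fa j)) = \<eta> (Fo i) (tr_unit C w Fo Fa i)"
    if ij: "(i, j) \<in> arr (lin w)" for i j
  proof -
    have \<phi>: "Fa (i, j) \<in> hom C (Fo i) (Fo j)"
      using path_arr[OF P ij] .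
    have "j \<le> length w"
      using lin_arr_bounded[OF ij] by simp
    then have "\<eta> (Fo i) (act (track C w Fo Fa) (Fa (i, j)) (tr_unit C w Fo Fa j)) =
        act X (Fa (i, j)) (\<eta> (Fo j) (tr_unit C w Fo Fa j))"
      using H unit_elts \<phi> unfolding aut_hom_def hom_def by auto
    then show ?thesis
      using track_act_unit[OF C P PT ij] by simp
  qed
  ultimately show ?thesis
    using H by (auto simp: accepting_lift_def path_lift_def aut_hom_def track_start_accept)
qed

theorem corollary8:
  fixes C :: "('o, 'm) dcat" and X :: "('o, 'm, 'x) automaton" and G :: "('o, 'm, 'y) automaton"
  assumes "dcategory C" and "is_automaton C X" and "is_track_object C G"
  shows "in_Lang C X G \<longleftrightarrow>
    (\<exists>w Ao Aa. accepting_path C X w Ao Aa \<and> aut_iso C G (track C w (fst \<circ> Ao) (fst \<circ> Aa)))"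
proof -
  have C: "category C"
    using assms(1) by (simp add: dcategory_def)
  show ?thesis
  proof
    assume "in_Lang C X G"
    then obtain w Fo Fa \<eta> where P: "is_path C w Fo Fa" and iso: "aut_iso C G (track C w Fo Fa)"
      and \<eta>: "aut_hom C G X \<eta>"
      by (auto simp: in_Lang_def is_track_object_def)
    from iso obtain \<theta> where \<theta>: "aut_hom C (track C w Fo Fa) G \<theta>"
      by (auto simp: aut_iso_def)
    from accepting_lift_from_aut_hom[OF C P aut_hom_comp[OF C \<theta> \<eta>]]
    obtain xs where "accepting_lift X w Fo Fa xs" ..
    then have "accepting_path C X w (\<lambda>i. (Fo i, xs i)) (\<lambda>e. (Fa e, xs (snd e)))"
      by (rule accepting_lift_is_accepting_path[OF P])
    then show "\<exists>w Ao Aa. accepting_path C X w Ao Aa \<and> aut_iso C G (track C w (fst \<circ> Ao) (fst \<circ> Aa))"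
      using iso by (intro exI[of _ w] exI[of _ "\<lambda>i. (Fo i, xs i)"] exI[of _ "\<lambda>e. (Fa e, xs (snd e))"])
        (simp add: comp_def)
  next
    assume "\<exists>w Ao Aa. accepting_path C X w Ao Aa \<and> aut_iso C G (track C w (fst \<circ> Ao) (fst \<circ> Aa))"
    then obtain w Ao Aa \<theta> where A: "accepting_path C X w Ao Aa"
      and \<theta>: "aut_hom C G (track C w (fst \<circ> Ao) (fst \<circ> Aa)) \<theta>"
      by (auto simp: aut_iso_def)
    have "is_automaton C (track C w (fst \<circ> Ao) (fst \<circ> Aa))"
      using \<theta> by (simp add: aut_hom_def)
    from aut_hom_from_accepting_lift[OF C accepting_path_projects[OF A] assms(2) this]
    have "aut_hom C G X (\<lambda>U x. lift_eval X (snd \<circ> Ao) (SOME p. p \<in> \<theta> U x))"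
      by (rule aut_hom_comp[OF C \<theta>])
    then show "in_Lang C X G"
      using assms(3) by (auto simp: in_Lang_def)
  qed
qed

end
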